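(* If $\mathcal A$ is a vaguely bounded set of positive definite measures on $\mathbb R^d$, then $\widehat{\mathcal A}:=\{\widehat\mu:\mu\in\mathcal A\}$ is equi translation bounded.
   Context: Measures on $\mathbb R^d$ are complex Radon measures; $|\mu|$ is the total variation. With $\widetilde f(x)=\overline{f(-x)}$, a measure $\mu$ is positive definite if $\mu(f*\widetilde f)\ge0$ for all $f\in C_c(\mathbb R^d)$; such $\mu$ has a Fourier transform $\widehat\mu$, the (positive) measure with $\check f\in L^2(\widehat\mu)$ and $\mu(f*\widetilde f)=\widehat\mu(|\check f|^2)$ for all $f\in C_c$, $\check f(y)=\int f(x)e^{2\pi ixy}dx$. A set $\mathcal A$ of measures is vaguely bounded if $\{\mu(f):\mu\in\mathcal A\}$ is bounded for each $f\in C_c(\mathbb R^d)$; a family is equi translation bounded if $\sup\sup_{t}|\nu|(t+K)<\infty$ over the family for every compact $K$. *)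

theory Defs
  imports "HOL-Analysis.Analysis"
begin

text \<open>Continuous compactly supported complex functions on R^d (d arbitrary,
  modelled by a euclidean_space type).\<close>
definition Cc :: "('a::euclidean_space \<Rightarrow> complex) set" where
  "Cc = {f. continuous_on UNIV f \<and> compact (closure {x. f x \<noteq> 0})}"

text \<open>Complex Radon measures, viewed (Riesz/Bourbaki) as linear functionals on Cc
  that are continuous in the inductive limit topology.\<close>
definition complex_radon :: "(('a::euclidean_space \<Rightarrow> complex) \<Rightarrow> complex) \<Rightarrow> bool" where
  "complex_radon \<mu> \<longleftrightarrow>
     (\<forall>f\<in>Cc. \<forall>g\<in>Cc. \<mu> (\<lambda>x. f x + g x) = \<mu> f + \<mu> g) \<and>
     (\<forall>c. \<forall>f\<in>Cc. \<mu> (\<lambda>x. c * f x) = c * \<mu> f) \<and>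
     (\<forall>K. compact K \<longrightarrow> (\<exists>C. \<forall>f\<in>Cc. {x. f x \<noteq> 0} \<subseteq> K \<longrightarrow>
          cmod (\<mu> f) \<le> C * (SUP x. cmod (f x))))"

definition tilde :: "('a::euclidean_space \<Rightarrow> complex) \<Rightarrow> 'a \<Rightarrow> complex" where
  "tilde f x = cnj (f (- x))"

definition conv :: "('a::euclidean_space \<Rightarrow> complex) \<Rightarrow> ('a \<Rightarrow> complex) \<Rightarrow> 'a \<Rightarrow> complex" where
  "conv f g x = (LINT y|lborel. f y * g (x - y))"

definition icheck :: "('a::euclidean_space \<Rightarrow> complex) \<Rightarrow> 'a \<Rightarrow> complex" where
  "icheck f y = (LINT x|lborel. f x * cis (2 * pi * (x \<bullet> y)))"

definition positive_definite :: "(('a::euclidean_space \<Rightarrow> complex) \<Rightarrow> complex) \<Rightarrow> bool" where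
  "positive_definite \<mu> \<longleftrightarrow> complex_radon \<mu> \<and>
     (\<forall>f\<in>Cc. Im (\<mu> (conv f (tilde f))) = 0 \<and> 0 \<le> Re (\<mu> (conv f (tilde f))))"

definition is_fourier_transform ::
  "(('a::euclidean_space \<Rightarrow> complex) \<Rightarrow> complex) \<Rightarrow> 'a measure \<Rightarrow> bool" where
  "is_fourier_transform \<mu> \<nu> \<longleftrightarrow>
     sets \<nu> = sets borel \<and>
     (\<forall>K. compact K \<longrightarrow> emeasure \<nu> K < \<infinity>) \<and>
     (\<forall>f\<in>Cc. icheck f \<in> borel_measurable \<nu> \<and>
        integrable \<nu> (\<lambda>y. (cmod (icheck f y))\<^sup>2) \<and>
        \<mu> (conv f (tilde f)) = complex_of_real (LINT y|\<nu>. (cmod (icheck f y))\<^sup>2))"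

definition vaguely_bounded :: "((('a::euclidean_space \<Rightarrow> complex) \<Rightarrow> complex)) set \<Rightarrow> bool" where
  "vaguely_bounded A \<longleftrightarrow> (\<forall>f\<in>Cc. \<exists>C. \<forall>\<mu>\<in>A. cmod (\<mu> f) \<le> C)"

text \<open>Equi translation boundedness of a family of positive measures (|nu| = nu).\<close>
definition equi_translation_bounded :: "('a::euclidean_space measure) set \<Rightarrow> bool" where
  "equi_translation_bounded N \<longleftrightarrow>
     (\<forall>K. compact K \<longrightarrow> (\<exists>C::real. \<forall>\<nu>\<in>N. \<forall>t. emeasure \<nu> ((\<lambda>x. t + x) ` K) \<le> ennreal C))"

end

theory Submission
  imports Defs
begin

(* Fix a compact K. Modulating a small tent function tau gives test functions
   f_t(x) = tau(x) e^(-2 pi i <x,t>) whose inverse Fourier transforms satisfy |check f_t| >= c > 0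
   on t + K, so c^2 nu(t + K) <= integral |check f_t|^2 d nu = mu(f_t * tilde f_t) whenever nu is the
   Fourier transform of mu. The functions g_t = f_t * tilde f_t are uniformly bounded with a common
   compact support, and mu(g_t) >= 0 by positive definiteness. A gliding hump argument bounds mu(g_t)
   uniformly in mu and t: otherwise pick mu_j, t_j with mu_j(g_(t_j)) > 2^j j and test the vague bound
   on G = sum_j 2^(-j) g_(t_j); as all terms are nonnegative, mu_j(G) >= 2^(-j) mu_j(g_(t_j)) > j. *)

section \<open>Compactly supported test functions\<close>

lemma Cc_intro:
  assumes "continuous_on UNIV f" "{x. f x \<noteq> 0} \<subseteq> K" "compact K"
  shows "f \<in> Cc"
proof -
  have "closure {x. f x \<noteq> 0} \<subseteq> K"
    using assms by (simp add: closure_minimal compact_imp_closed)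
  then have "closure {x. f x \<noteq> 0} = closure {x. f x \<noteq> 0} \<inter> K" by blast
  moreover have "compact (closure {x. f x \<noteq> 0} \<inter> K)"
    by (rule closed_Int_compact[OF closed_closure assms(3)])
  ultimately show ?thesis unfolding Cc_def using assms(1) by simp
qed

lemma Cc_imp_continuous: "f \<in> Cc \<Longrightarrow> continuous_on UNIV f"
  by (simp add: Cc_def)

lemma Cc_imp_compact_support:
  assumes "f \<in> Cc"
  obtains K where "compact K" "{x. f x \<noteq> 0} \<subseteq> K"
proof (rule that)
  show "compact (closure {x. f x \<noteq> 0})" using assms by (simp add: Cc_def)
qed (rule closure_subset)

lemma support_subset_Un:
  assumes "{x. f x \<noteq> 0} \<subseteq> K" "{x. g x \<noteq> 0} \<subseteq> L" "\<And>x. f x = 0 \<Longrightarrow> g x = 0 \<Longrightarrow> h x = 0"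
  shows "{x. h x \<noteq> 0} \<subseteq> K \<union> L"
  using assms by blast

lemma Cc_add:
  assumes "f \<in> Cc" "g \<in> Cc"
  shows "(\<lambda>x. f x + g x) \<in> Cc"
proof -
  obtain K L where "compact K" "{x. f x \<noteq> 0} \<subseteq> K" "compact L" "{x. g x \<noteq> 0} \<subseteq> L"
    using assms by (metis Cc_imp_compact_support)
  then show ?thesis
    using assms by (intro Cc_intro[where K="K \<union> L"] continuous_on_add support_subset_Un[of f K g L] compact_Un)
      (auto intro: Cc_imp_continuous)
qed

lemma Cc_cmult:
  assumes "f \<in> Cc"
  shows "(\<lambda>x. c * f x) \<in> Cc"
proof -
  obtain K where "compact K" "{x. f x \<noteq> 0} \<subseteq> K"
    using assms by (metis Cc_imp_compact_support)
  then show ?thesis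
    using assms by (intro Cc_intro[where K=K] continuous_on_mult continuous_on_const) (auto intro: Cc_imp_continuous)
qed

lemma Cc_diff:
  assumes "f \<in> Cc" "g \<in> Cc"
  shows "(\<lambda>x. f x - g x) \<in> Cc"
  using Cc_add[OF assms(1) Cc_cmult[OF assms(2), of "-1"]] by simp

lemma Cc_sum:
  fixes N :: nat
  assumes "\<And>j. h j \<in> Cc"
  shows "(\<lambda>x. \<Sum>j<N. h j x) \<in> Cc"
proof (induction N)
  case 0
  show ?case by (rule Cc_intro[where K="{}"]) auto
next
  case (Suc N)
  then show ?case using Cc_add[OF Suc assms] by simp
qed

lemma Cc_uniform_limit:
  assumes fs: "\<And>n. fs n \<in> Cc" "\<And>n. {x. fs n x \<noteq> 0} \<subseteq> K" and K: "compact K"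
    and lim: "uniform_limit UNIV fs f sequentially"
  shows "f \<in> Cc" "{x. f x \<noteq> 0} \<subseteq> K"
proof -
  show supp: "{x. f x \<noteq> 0} \<subseteq> K"
  proof (rule subsetI, rule ccontr)
    fix x assume x: "x \<in> {x. f x \<noteq> 0}" "x \<notin> K"
    have "(\<lambda>n. fs n x) \<longlonglongrightarrow> f x" using tendsto_uniform_limitI[OF lim] by simp
    moreover have "(\<lambda>n. fs n x) = (\<lambda>n. 0)" using fs(2) x(2) by blast
    ultimately have "f x = 0" by (simp add: LIMSEQ_const_iff)
    with x(1) show False by simp
  qed
  have "continuous_on UNIV f"
    by (rule uniform_limit_theorem[OF always_eventually lim]) (auto intro: Cc_imp_continuous fs(1))
  then show "f \<in> Cc" using supp K by (rule Cc_intro)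
qed

section \<open>Radon functionals\<close>

lemma complex_radon_add:
  "complex_radon \<mu> \<Longrightarrow> f \<in> Cc \<Longrightarrow> g \<in> Cc \<Longrightarrow> \<mu> (\<lambda>x. f x + g x) = \<mu> f + \<mu> g"
  by (simp add: complex_radon_def)

lemma complex_radon_cmult:
  "complex_radon \<mu> \<Longrightarrow> f \<in> Cc \<Longrightarrow> \<mu> (\<lambda>x. c * f x) = c * \<mu> f"
  by (simp add: complex_radon_def)

lemma complex_radon_diff:
  assumes "complex_radon \<mu>" "f \<in> Cc" "g \<in> Cc"
  shows "\<mu> (\<lambda>x. f x - g x) = \<mu> f - \<mu> g"
proof -
  have "\<mu> f = \<mu> (\<lambda>x. (f x - g x) + g x)" by simp
  also have "\<dots> = \<mu> (\<lambda>x. f x - g x) + \<mu> g"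
    using assms by (intro complex_radon_add Cc_diff)
  finally show ?thesis by simp
qed

lemma complex_radon_sum:
  fixes N :: nat
  assumes "complex_radon \<mu>" "\<And>j. h j \<in> Cc"
  shows "\<mu> (\<lambda>x. \<Sum>j<N. h j x) = (\<Sum>j<N. \<mu> (h j))"
proof (induction N)
  case 0
  show ?case using complex_radon_cmult[OF assms(1) assms(2), of 0] by simp
next
  case (Suc N)
  then show ?case using complex_radon_add[OF assms(1) Cc_sum[OF assms(2)] assms(2)] by simp
qed

lemma complex_radon_small:
  assumes "complex_radon \<mu>" "compact K" "e > 0"
  obtains \<delta> where "\<delta> > 0"
    "\<And>f. f \<in> Cc \<Longrightarrow> {x. f x \<noteq> 0} \<subseteq> K \<Longrightarrow> (\<And>x. cmod (f x) \<le> \<delta>) \<Longrightarrow> cmod (\<mu> f) < e"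
proof -
  have "\<forall>K. compact K \<longrightarrow> (\<exists>C. \<forall>f\<in>Cc. {x. f x \<noteq> 0} \<subseteq> K \<longrightarrow>
          cmod (\<mu> f) \<le> C * (SUP x. cmod (f x)))"
    using assms(1) unfolding complex_radon_def by (elim conjE)
  then obtain C where C: "\<forall>f\<in>Cc. {x. f x \<noteq> 0} \<subseteq> K \<longrightarrow> cmod (\<mu> f) \<le> C * (SUP x. cmod (f x))"
    using assms(2) by auto
  have pos: "max C 0 + 1 > 0" by simp
  define \<delta> where "\<delta> = e / (max C 0 + 1)"
  have \<delta>: "\<delta> > 0" using assms(3) pos by (simp add: \<delta>_def)
  show ?thesis
  proof (rule that)
    show "\<delta> > 0" by (rule \<delta>)
    fix f assume f: "f \<in> Cc" "{x. f x \<noteq> 0} \<subseteq> K" and small: "\<And>x. cmod (f x) \<le> \<delta>"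
    have sup_le: "(SUP x. cmod (f x)) \<le> \<delta>" by (rule cSUP_least) (simp_all add: small)
    have "bdd_above (range (\<lambda>x. cmod (f x)))" by (rule bdd_aboveI2) (rule small)
    then have "cmod (f 0) \<le> (SUP x. cmod (f x))" by (rule cSUP_upper[rotated]) simp
    then have sup_ge: "0 \<le> (SUP x. cmod (f x))" by (rule order_trans[OF norm_ge_zero])
    have "cmod (\<mu> f) \<le> C * (SUP x. cmod (f x))" using C f by blast
    also have "\<dots> \<le> max C 0 * \<delta>" using sup_le sup_ge by (intro mult_mono) auto
    also have "\<dots> < (max C 0 + 1) * \<delta>" using \<delta> by simp
    also have "\<dots> = e" using pos by (simp add: \<delta>_def)
    finally show "cmod (\<mu> f) < e" .
  qed
qed

lemma complex_radon_tendsto_uniform_limit: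
  assumes \<mu>: "complex_radon \<mu>" and K: "compact K"
    and fs: "\<And>n. fs n \<in> Cc" "\<And>n. {x. fs n x \<noteq> 0} \<subseteq> K"
    and f: "f \<in> Cc" "{x. f x \<noteq> 0} \<subseteq> K"
    and lim: "uniform_limit UNIV fs f sequentially"
  shows "(\<lambda>n. \<mu> (fs n)) \<longlonglongrightarrow> \<mu> f"
proof (rule tendstoI)
  fix e :: real assume "e > 0"
  then obtain \<delta> where \<delta>: "\<delta> > 0" and small:
    "\<And>h. h \<in> Cc \<Longrightarrow> {x. h x \<noteq> 0} \<subseteq> K \<Longrightarrow> (\<And>x. cmod (h x) \<le> \<delta>) \<Longrightarrow> cmod (\<mu> h) < e"
    using complex_radon_small[OF \<mu> K] by metis
  from uniform_limitD[OF lim \<delta>]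
  show "eventually (\<lambda>n. dist (\<mu> (fs n)) (\<mu> f) < e) sequentially"
  proof eventually_elim
    case (elim n)
    have "{x. fs n x - f x \<noteq> 0} \<subseteq> K" using support_subset_Un[OF fs(2) f(2), where h="\<lambda>x. fs n x - f x"] by simp
    then have "cmod (\<mu> (\<lambda>x. fs n x - f x)) < e"
      using elim by (intro small Cc_diff fs f) (auto simp: dist_norm less_imp_le)
    then show ?case using complex_radon_diff[OF \<mu> fs(1) f(1)] by (simp add: dist_norm)
  qed
qed

lemma vaguely_bounded_subset:
  assumes "vaguely_bounded A" "B \<subseteq> A"
  shows "vaguely_bounded B"
  unfolding vaguely_bounded_def
proof
  fix f :: "'a \<Rightarrow> complex"
  assume "f \<in> Cc"
  with assms(1) have "\<exists>C. \<forall>\<mu>\<in>A. cmod (\<mu> f) \<le> C" unfolding vaguely_bounded_def by (rule bspec)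
  then show "\<exists>C. \<forall>\<mu>\<in>B. cmod (\<mu> f) \<le> C" using assms(2) by auto
qed

lemma Cc_geometric_series:
  fixes g :: "nat \<Rightarrow> 'a::euclidean_space \<Rightarrow> complex"
  assumes g: "\<And>j. g j \<in> Cc" "\<And>j x. cmod (g j x) \<le> M" "\<And>j. {x. g j x \<noteq> 0} \<subseteq> L"
    and L: "compact L"
  shows "(\<lambda>x. \<Sum>j. (1/2) ^ j * g j x) \<in> Cc"
    and "complex_radon \<mu> \<Longrightarrow> (\<lambda>j. (1/2) ^ j * \<mu> (g j)) sums \<mu> (\<lambda>x. \<Sum>j. (1/2) ^ j * g j x)"
proof -
  define w where "w j x = (1/2::complex) ^ j * g j x" for j x
  have w: "w j \<in> Cc" for j
    unfolding w_def[abs_def] by (rule Cc_cmult[OF g(1)])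
  have partial_sum: "(\<lambda>x. \<Sum>j<N. w j x) \<in> Cc" "{x. (\<Sum>j<N. w j x) \<noteq> 0} \<subseteq> L" for N
  proof -
    show "(\<lambda>x. \<Sum>j<N. w j x) \<in> Cc" by (rule Cc_sum[OF w])
    show "{x. (\<Sum>j<N. w j x) \<noteq> 0} \<subseteq> L"
    proof
      fix x assume "x \<in> {x. (\<Sum>j<N. w j x) \<noteq> 0}"
      then obtain j where "w j x \<noteq> 0" by (meson mem_Collect_eq sum.neutral)
      then show "x \<in> L" using g(3) by (auto simp: w_def)
    qed
  qed
  have lim: "uniform_limit UNIV (\<lambda>N x. \<Sum>j<N. w j x) (\<lambda>x. \<Sum>j. w j x) sequentially"
  proof (rule Weierstrass_m_test[where M="\<lambda>j. (1/2) ^ j * M"])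
    show "norm (w j x) \<le> (1/2) ^ j * M" for j x
      unfolding w_def by (simp add: norm_mult norm_power mult_left_mono g(2))
    show "summable (\<lambda>j. (1/2::real) ^ j * M)"
      by (intro summable_mult2 summable_geometric) simp
  qed
  have G: "(\<lambda>x. \<Sum>j. w j x) \<in> Cc" "{x. (\<Sum>j. w j x) \<noteq> 0} \<subseteq> L"
    using Cc_uniform_limit[OF partial_sum L lim] by blast+
  then show "(\<lambda>x. \<Sum>j. (1/2) ^ j * g j x) \<in> Cc"
    by (simp add: w_def)
  assume \<mu>: "complex_radon \<mu>"
  have "\<mu> (\<lambda>x. \<Sum>j<N. w j x) = (\<Sum>j<N. (1/2) ^ j * \<mu> (g j))" for N
  proof -
    have "\<mu> (\<lambda>x. \<Sum>j<N. w j x) = (\<Sum>j<N. \<mu> (w j))" by (rule complex_radon_sum[OF \<mu> w])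
    also have "\<dots> = (\<Sum>j<N. (1/2) ^ j * \<mu> (g j))"
      unfolding w_def[abs_def] using complex_radon_cmult[OF \<mu> g(1)] by simp
    finally show ?thesis .
  qed
  moreover have "(\<lambda>N. \<mu> (\<lambda>x. \<Sum>j<N. w j x)) \<longlonglongrightarrow> \<mu> (\<lambda>x. \<Sum>j. w j x)"
    by (rule complex_radon_tendsto_uniform_limit[OF \<mu> L partial_sum G lim])
  ultimately show "(\<lambda>j. (1/2) ^ j * \<mu> (g j)) sums \<mu> (\<lambda>x. \<Sum>j. (1/2) ^ j * g j x)"
    by (simp add: sums_def w_def)
qed

lemma gliding_hump:
  fixes ms :: "nat \<Rightarrow> ('a::euclidean_space \<Rightarrow> complex) \<Rightarrow> complex" and g :: "nat \<Rightarrow> 'a \<Rightarrow> complex"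
  assumes radon: "\<And>i. complex_radon (ms i)" and bounded: "vaguely_bounded (range ms)"
    and g: "\<And>j. g j \<in> Cc" "\<And>j x. cmod (g j x) \<le> M" "\<And>j. {x. g j x \<noteq> 0} \<subseteq> L"
    and L: "compact L"
    and nonneg: "\<And>i j. 0 \<le> Re (ms i (g j))"
  shows "\<exists>B. \<forall>i. Re (ms i (g i)) \<le> 2 ^ i * B"
proof -
  define G where "G x = (\<Sum>j. (1/2) ^ j * g j x)" for x
  have "\<exists>C. \<forall>\<mu>\<in>range ms. cmod (\<mu> G) \<le> C"
    using bounded Cc_geometric_series(1)[OF g L] unfolding vaguely_bounded_def G_def[abs_def] by (rule bspec)
  then obtain C where C: "\<And>i. cmod (ms i G) \<le> C" by blast
  have "Re (ms i (g i)) \<le> 2 ^ i * C" for i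
  proof -
    have "(\<lambda>j. (1/2) ^ j * ms i (g j)) sums ms i G"
      unfolding G_def[abs_def] by (rule Cc_geometric_series(2)[OF g L radon])
    then have "(\<lambda>j. (1/2) ^ j * Re (ms i (g j))) sums Re (ms i G)"
      by (simp add: sums_complex_iff)
    then have "(1/2) ^ i * Re (ms i (g i)) \<le> Re (ms i G)"
      using sum_le_suminf[of "\<lambda>j. (1/2) ^ j * Re (ms i (g j))" "{i}"] nonneg by (simp add: sums_iff)
    also have "\<dots> \<le> C"
      using C[of i] complex_Re_le_cmod[of "ms i G"] by linarith
    finally show ?thesis by (simp add: field_simps)
  qed
  then show ?thesis by blast
qed

lemma vaguely_bounded_uniform_bound:
  fixes A :: "(('a::euclidean_space \<Rightarrow> complex) \<Rightarrow> complex) set" and g :: "'b \<Rightarrow> 'a \<Rightarrow> complex"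
  assumes radon: "\<forall>\<mu>\<in>A. complex_radon \<mu>" and vb: "vaguely_bounded A"
    and g: "\<And>t. g t \<in> Cc" "\<And>t x. cmod (g t x) \<le> M" "\<And>t. {x. g t x \<noteq> 0} \<subseteq> L" "compact L"
    and nonneg: "\<And>\<mu> t. \<mu> \<in> A \<Longrightarrow> 0 \<le> Re (\<mu> (g t))"
  shows "\<exists>B. \<forall>\<mu>\<in>A. \<forall>t. Re (\<mu> (g t)) \<le> B"
proof (rule ccontr)
  assume "\<not> ?thesis"
  then have "\<exists>\<mu>\<in>A. \<exists>t. b < Re (\<mu> (g t))" for b
    by (auto simp: not_le)
  then have "\<forall>j::nat. \<exists>\<mu> t. \<mu> \<in> A \<and> 2 ^ j * real j < Re (\<mu> (g t))"
    by blast
  then obtain ms ts where ms: "\<And>j. ms j \<in> A" and big: "\<And>j. 2 ^ j * real j < Re (ms j (g (ts j)))"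
    by metis
  have "\<exists>B. \<forall>i. Re (ms i (g (ts i))) \<le> 2 ^ i * B"
  proof (rule gliding_hump[where g="\<lambda>j. g (ts j)"])
    show "vaguely_bounded (range ms)"
      using ms by (intro vaguely_bounded_subset[OF vb]) auto
    show "complex_radon (ms i)" for i using radon ms by blast
    show "g (ts j) \<in> Cc" "cmod (g (ts j) x) \<le> M" "{x. g (ts j) x \<noteq> 0} \<subseteq> L" for j x
      by (fact g(1), fact g(2), fact g(3))
    show "0 \<le> Re (ms i (g (ts j)))" for i j by (rule nonneg[OF ms])
  qed (fact g(4))
  then obtain B where B: "\<And>i. Re (ms i (g (ts i))) \<le> 2 ^ i * B" by blast
  obtain j :: nat where "B < real j" using reals_Archimedean2 by blast
  then have "2 ^ j * B < 2 ^ j * real j" by simp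
  with big[of j] B[of j] show False by linarith
qed

section \<open>Tent functions and their modulations\<close>

lemma borel_integrable_vanishing_outside_cball:
  fixes \<phi> :: "'a::euclidean_space \<Rightarrow> 'b::{banach, second_countable_topology}"
  assumes "continuous_on UNIV \<phi>" "\<And>x. r < norm x \<Longrightarrow> \<phi> x = 0"
  shows "integrable lborel \<phi>"
proof -
  have "integrable lborel (\<lambda>x. indicator (cball 0 r) x *\<^sub>R \<phi> x)"
    by (rule borel_integrable_compact) (auto intro: continuous_on_subset[OF assms(1)])
  moreover have "(\<lambda>x. indicator (cball 0 r) x *\<^sub>R \<phi> x) = \<phi>"
    using assms(2) by (auto simp: indicator_def fun_eq_iff not_le)
  ultimately show ?thesis by simp
qed

definition tent :: "real \<Rightarrow> 'a::real_normed_vector \<Rightarrow> real" where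
  "tent d x = max 0 (d - norm x)"

lemma continuous_on_tent: "continuous_on UNIV (tent d)"
  unfolding tent_def by (intro continuous_intros)

lemma tent_nonneg: "0 \<le> tent d x"
  by (simp add: tent_def)

lemma tent_le: "0 \<le> d \<Longrightarrow> tent d x \<le> d"
  by (simp add: tent_def)

lemma tent_eq_0: "d \<le> norm x \<Longrightarrow> tent d x = 0"
  by (simp add: tent_def)

lemma norm_less_if_tent_neq_0: "tent d x \<noteq> 0 \<Longrightarrow> norm x < d"
  by (auto simp: tent_def)

lemma tent_lipschitz: "\<bar>tent d x - tent d y\<bar> \<le> norm (x - y)"
  unfolding tent_def using norm_triangle_ineq3[of x y] by (auto simp: max_def)

lemma integrable_tent_mult:
  fixes h :: "'a::euclidean_space \<Rightarrow> real"
  assumes "continuous_on UNIV h"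
  shows "integrable lborel (\<lambda>x. tent d x * h x)"
  by (rule borel_integrable_vanishing_outside_cball[where r=d])
    (intro continuous_intros continuous_on_tent assms, simp add: tent_eq_0)

lemma integrable_tent: "integrable lborel (tent d :: 'a::euclidean_space \<Rightarrow> real)"
  using integrable_tent_mult[of "\<lambda>_. 1" d] by simp

lemma integral_tent_pos:
  assumes "d > 0"
  shows "0 < (LINT x|lborel. tent d (x::'a::euclidean_space))"
proof -
  have fin: "emeasure lborel (ball (0::'a) (d/2)) < \<infinity>" by (rule emeasure_lborel_ball_finite)
  have "0 < d/2 * measure lborel (ball (0::'a) (d/2))" using assms content_ball_pos[of "d/2" 0] by simp
  also have "\<dots> = (LINT x|lborel. d/2 * indicator (ball (0::'a) (d/2)) x)"
    by simp
  also have "\<dots> \<le> (LINT x|lborel. tent d (x::'a))"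
  proof (rule Bochner_Integration.integral_mono)
    show "integrable lborel (\<lambda>x. d/2 * indicator (ball (0::'a) (d/2)) x :: real)"
      using fin by (intro integrable_mult_right integrable_real_indicator) auto
    show "integrable lborel (tent d :: 'a \<Rightarrow> real)" by (rule integrable_tent)
    show "d/2 * indicator (ball (0::'a) (d/2)) x \<le> tent d x" for x
      using assms by (auto simp: indicator_def tent_def max_def)
  qed
  finally show ?thesis .
qed

definition tent_autocorr :: "real \<Rightarrow> 'a::euclidean_space \<Rightarrow> real" where
  "tent_autocorr d x = (LINT y|lborel. tent d y * tent d (y - x))"

lemma integrable_tent_mult_shift: "integrable lborel (\<lambda>y. tent d y * tent d (y - x :: 'a::euclidean_space))"
  by (rule integrable_tent_mult) (intro continuous_intros continuous_on_compose2[OF continuous_on_tent], auto)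

lemma tent_autocorr_eq_0:
  assumes "2 * d \<le> norm x"
  shows "tent_autocorr d x = 0"
proof -
  have vanish: "tent d y * tent d (y - x) = 0" for y
  proof (cases "tent d y = 0")
    case False
    then have "norm y < d" by (rule norm_less_if_tent_neq_0)
    moreover have "norm x \<le> norm y + norm (y - x)"
      using norm_triangle_ineq4[of y "y - x"] by simp
    ultimately have "d \<le> norm (y - x)" using assms by linarith
    then show ?thesis by (simp add: tent_eq_0)
  qed simp
  show ?thesis unfolding tent_autocorr_def vanish by simp
qed

lemma abs_tent_autocorr_le:
  fixes x :: "'a::euclidean_space"
  assumes "0 \<le> d"
  shows "\<bar>tent_autocorr d x\<bar> \<le> d * (LINT y|lborel. tent d (y::'a))"
proof -
  have "\<bar>tent_autocorr d x\<bar> \<le> (LINT y|lborel. d * tent d (y::'a))"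
    unfolding tent_autocorr_def
  proof (rule integral_abs_bound_integral[OF integrable_tent_mult_shift])
    show "integrable lborel (\<lambda>y. d * tent d (y::'a))" by (intro integrable_mult_right integrable_tent)
    show "\<bar>tent d y * tent d (y - x)\<bar> \<le> d * tent d y" for y
      using tent_nonneg[of d y] tent_nonneg[of d "y - x"] tent_le[OF assms, of "y - x"]
      by (simp add: abs_mult mult.commute[of d] mult_left_mono)
  qed
  then show ?thesis by simp
qed

lemma tent_autocorr_lipschitz:
  fixes x x' :: "'a::euclidean_space"
  shows "\<bar>tent_autocorr d x - tent_autocorr d x'\<bar> \<le> (LINT y|lborel. tent d (y::'a)) * norm (x - x')"
proof -
  have "tent_autocorr d x - tent_autocorr d x' =
      (LINT y|lborel. tent d y * tent d (y - x) - tent d y * tent d (y - x'))"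
    unfolding tent_autocorr_def
    by (rule Bochner_Integration.integral_diff[OF integrable_tent_mult_shift integrable_tent_mult_shift, symmetric])
  also have "\<bar>\<dots>\<bar> \<le> (LINT y|lborel. tent d (y::'a) * norm (x - x'))"
  proof (rule integral_abs_bound_integral)
    show "integrable lborel (\<lambda>y. tent d y * tent d (y - x) - tent d y * tent d (y - x'))"
      by (intro Bochner_Integration.integrable_diff integrable_tent_mult_shift)
    show "integrable lborel (\<lambda>y. tent d (y::'a) * norm (x - x'))"
      by (intro integrable_mult_left integrable_tent)
    fix y :: 'a
    have "\<bar>tent d (y - x) - tent d (y - x')\<bar> \<le> norm (x - x')"
      using tent_lipschitz[of d "y - x" "y - x'"] by (simp add: norm_minus_commute)
    then have "tent d y * \<bar>tent d (y - x) - tent d (y - x')\<bar> \<le> tent d y * norm (x - x')"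
      by (rule mult_left_mono[OF _ tent_nonneg])
    then show "\<bar>tent d y * tent d (y - x) - tent d y * tent d (y - x')\<bar> \<le> tent d y * norm (x - x')"
      using tent_nonneg[of d y] by (simp add: abs_mult right_diff_distrib[symmetric])
  qed
  also have "\<dots> = (LINT y|lborel. tent d (y::'a)) * norm (x - x')" by simp
  finally show ?thesis .
qed

lemma continuous_on_tent_autocorr: "continuous_on UNIV (tent_autocorr d :: 'a::euclidean_space \<Rightarrow> real)"
proof (rule lipschitz_on_continuous_on[OF lipschitz_onI])
  show "dist (tent_autocorr d x) (tent_autocorr d x') \<le> (LINT y|lborel. tent d (y::'a)) * dist x x'"
    for x x' :: 'a
    using tent_autocorr_lipschitz[of d x x'] by (simp add: dist_real_def dist_norm)
  show "0 \<le> (LINT y|lborel. tent d (y::'a))"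
    by (rule Bochner_Integration.integral_nonneg) (simp add: tent_nonneg)
qed

definition tent_wave :: "real \<Rightarrow> 'a::euclidean_space \<Rightarrow> 'a \<Rightarrow> complex" where
  "tent_wave d t x = complex_of_real (tent d x) * cis (- (2 * pi * (x \<bullet> t)))"

lemma tent_wave_Cc: "tent_wave d t \<in> Cc"
proof (rule Cc_intro[OF _ _ compact_cball])
  show "continuous_on UNIV (tent_wave d t)"
    unfolding tent_wave_def[abs_def] by (intro continuous_intros continuous_on_of_real continuous_on_tent)
  show "{x. tent_wave d t x \<noteq> 0} \<subseteq> cball 0 d"
    by (auto simp: tent_wave_def dest: norm_less_if_tent_neq_0)
qed

lemma conv_tent_wave:
  "conv (tent_wave d t) (tilde (tent_wave d t)) x =
     cis (- (2 * pi * (x \<bullet> t))) * complex_of_real (tent_autocorr d x)"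
proof -
  have integrand: "tent_wave d t y * tilde (tent_wave d t) (x - y) =
      cis (- (2 * pi * (x \<bullet> t))) * complex_of_real (tent d y * tent d (y - x))" for y
  proof -
    have "tent_wave d t y * tilde (tent_wave d t) (x - y) = complex_of_real (tent d y * tent d (y - x)) *
        (cis (- (2 * pi * (y \<bullet> t))) * cis (2 * pi * ((y - x) \<bullet> t)))"
      unfolding tilde_def tent_wave_def minus_diff_eq by (simp add: cis_cnj)
    also have "cis (- (2 * pi * (y \<bullet> t))) * cis (2 * pi * ((y - x) \<bullet> t)) = cis (- (2 * pi * (x \<bullet> t)))"
      by (simp add: cis_mult algebra_simps)
    finally show ?thesis by simp
  qed
  show ?thesis
    unfolding conv_def integrand tent_autocorr_def
    by (simp only: integral_mult_right_zero integral_complex_of_real)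
qed

lemma conv_tent_wave_support:
  "{x. conv (tent_wave d t) (tilde (tent_wave d t)) x \<noteq> 0} \<subseteq> cball 0 (2 * d)"
  using tent_autocorr_eq_0[of d] by (force simp: conv_tent_wave)

lemma conv_tent_wave_Cc: "conv (tent_wave d t) (tilde (tent_wave d t)) \<in> Cc"
proof (rule Cc_intro[OF _ conv_tent_wave_support compact_cball])
  show "continuous_on UNIV (conv (tent_wave d t) (tilde (tent_wave d t)))"
    unfolding conv_tent_wave[abs_def]
    by (intro continuous_intros continuous_on_of_real continuous_on_tent_autocorr)
qed

lemma norm_conv_tent_wave_le:
  fixes x :: "'a::euclidean_space"
  assumes "0 \<le> d"
  shows "cmod (conv (tent_wave d t) (tilde (tent_wave d t)) x) \<le> d * (LINT y|lborel. tent d (y::'a))"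
  using abs_tent_autocorr_le[OF assms, of x] by (simp add: conv_tent_wave norm_mult)

lemma icheck_tent_wave: "icheck (tent_wave d t) y = icheck (tent_wave d 0) (y - t)"
proof -
  have "tent_wave d t x * cis (2 * pi * (x \<bullet> y)) = tent_wave d 0 x * cis (2 * pi * (x \<bullet> (y - t)))" for x
    by (simp add: tent_wave_def cis_mult algebra_simps)
  then show ?thesis unfolding icheck_def by simp
qed

lemma cos_ge_half: "\<bar>\<theta>::real\<bar> \<le> 1 \<Longrightarrow> 1/2 \<le> cos \<theta>"
proof -
  assume \<theta>: "\<bar>\<theta>\<bar> \<le> 1"
  have "1 \<le> pi / 3" using pi_gt3 by simp
  then have "cos (pi/3) \<le> cos \<bar>\<theta>\<bar>"
    using \<theta> cos_mono_le_eq[of "pi/3" "\<bar>\<theta>\<bar>"] pi_gt3 by simp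
  then show ?thesis by (simp add: cos_60)
qed

lemma Re_icheck_tent_wave_ge:
  fixes y :: "'a::euclidean_space"
  assumes "2 * pi * d * norm y \<le> 1"
  shows "(LINT x|lborel. tent d (x::'a)) / 2 \<le> Re (icheck (tent_wave d 0) y)"
proof -
  have "integrable lborel (\<lambda>x. tent_wave d 0 x * cis (2 * pi * (x \<bullet> y)))"
    by (rule borel_integrable_vanishing_outside_cball[where r=d])
      (unfold tent_wave_def, intro continuous_intros continuous_on_of_real continuous_on_tent, simp add: tent_eq_0)
  then have "Re (icheck (tent_wave d 0) y) = (LINT x|lborel. tent d x * cos (2 * pi * (x \<bullet> y)))"
    unfolding icheck_def by (subst integral_Re[symmetric]) (simp_all add: tent_wave_def)
  also have "(LINT x|lborel. tent d (x::'a) / 2) \<le> \<dots>"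
  proof (rule Bochner_Integration.integral_mono)
    show "integrable lborel (\<lambda>x. tent d (x::'a) / 2)"
      by (rule integrable_divide_zero) (rule integrable_tent)
    show "integrable lborel (\<lambda>x. tent d (x::'a) * cos (2 * pi * (x \<bullet> y)))"
      by (rule integrable_tent_mult) (intro continuous_intros)
    fix x :: 'a
    show "tent d x / 2 \<le> tent d x * cos (2 * pi * (x \<bullet> y))"
    proof (cases "tent d x = 0")
      case False
      then have "norm x < d" by (rule norm_less_if_tent_neq_0)
      then have "\<bar>x \<bullet> y\<bar> \<le> d * norm y"
        using Cauchy_Schwarz_ineq2[of x y] by (meson less_imp_le mult_right_mono norm_ge_zero order_trans)
      then have "\<bar>2 * pi * (x \<bullet> y)\<bar> \<le> 1"
        using assms by (simp add: abs_mult) (smt (verit) mult_left_mono pi_gt_zero mult.assoc)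
      then have "tent d x * (1/2) \<le> tent d x * cos (2 * pi * (x \<bullet> y))"
        by (intro mult_left_mono[OF cos_ge_half tent_nonneg])
      then show ?thesis by simp
    qed simp
  qed
  finally show ?thesis by simp
qed

lemma tent_wave_icheck_bounded_below:
  fixes K :: "'a::euclidean_space set"
  assumes "compact K"
  obtains d c where "d > 0" "c > 0" "\<And>t y. y - t \<in> K \<Longrightarrow> c \<le> cmod (icheck (tent_wave d t) y)"
proof -
  obtain R where R: "R > 0" "\<And>y. y \<in> K \<Longrightarrow> norm y \<le> R"
    using compact_imp_bounded[OF assms] unfolding bounded_pos by blast
  \<comment> \<open>keeps the phase 2 pi x.y in [-1, 1] on the support of the tent, where cos is at least 1/2\<close>
  define d where "d = 1 / (2 * pi * R)"
  have d: "d > 0" using R(1) by (simp add: d_def)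
  define c where "c = (LINT x|lborel. tent d (x::'a)) / 2"
  have c: "c > 0" using integral_tent_pos[OF d] by (simp add: c_def)
  show ?thesis
  proof (rule that[OF d c])
    fix t y :: 'a
    assume "y - t \<in> K"
    then have "2 * pi * d * norm (y - t) \<le> 1"
      using R by (simp add: d_def field_simps)
    then have "c \<le> Re (icheck (tent_wave d 0) (y - t))"
      unfolding c_def by (rule Re_icheck_tent_wave_ge)
    also have "\<dots> \<le> cmod (icheck (tent_wave d t) y)"
      unfolding icheck_tent_wave[of d t y] by (rule complex_Re_le_cmod)
    finally show "c \<le> cmod (icheck (tent_wave d t) y)" .
  qed
qed

section \<open>Fourier transforms of positive definite functionals\<close>

lemma fourier_transform_emeasure_le:
  assumes ft: "is_fourier_transform \<mu> \<nu>" and f: "f \<in> Cc" and S: "compact S" and c: "c > 0"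
    and lower: "\<And>y. y \<in> S \<Longrightarrow> c \<le> cmod (icheck f y)"
  shows "emeasure \<nu> S \<le> ennreal (Re (\<mu> (conv f (tilde f))) / c\<^sup>2)"
proof -
  have S_sets: "S \<in> sets \<nu>"
    using ft S unfolding is_fourier_transform_def by (simp add: borel_closed compact_imp_closed)
  have S_fin: "emeasure \<nu> S < \<infinity>"
    using ft S unfolding is_fourier_transform_def by blast
  have int: "integrable \<nu> (\<lambda>y. (cmod (icheck f y))\<^sup>2)"
    and eq: "\<mu> (conv f (tilde f)) = complex_of_real (LINT y|\<nu>. (cmod (icheck f y))\<^sup>2)"
    using ft f unfolding is_fourier_transform_def by blast+
  have "c\<^sup>2 * measure \<nu> S = (LINT y|\<nu>. indicator S y * c\<^sup>2)"
    using S_sets S_fin by simp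
  also have "\<dots> \<le> (LINT y|\<nu>. (cmod (icheck f y))\<^sup>2)"
  proof (rule Bochner_Integration.integral_mono[OF _ int])
    show "integrable \<nu> (\<lambda>y. indicator S y * c\<^sup>2)"
      using S_sets S_fin by (intro integrable_mult_left integrable_real_indicator)
    show "indicator S y * c\<^sup>2 \<le> (cmod (icheck f y))\<^sup>2" for y
      using lower[of y] c by (cases "y \<in> S") (auto intro: power_mono)
  qed
  also have "\<dots> = Re (\<mu> (conv f (tilde f)))"
    unfolding eq by simp
  finally have "measure \<nu> S \<le> Re (\<mu> (conv f (tilde f))) / c\<^sup>2"
    using c by (simp add: field_simps)
  then show ?thesis
    using S_fin by (simp add: emeasure_eq_ennreal_measure ennreal_leI)
qed

lemma positive_definite_tent_wave_bound:
  fixes A :: "(('a::euclidean_space \<Rightarrow> complex) \<Rightarrow> complex) set"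
  assumes pd: "\<forall>\<mu>\<in>A. positive_definite \<mu>" and vb: "vaguely_bounded A" and d: "0 \<le> d"
  obtains B where "\<And>\<mu> t. \<mu> \<in> A \<Longrightarrow> Re (\<mu> (conv (tent_wave d t) (tilde (tent_wave d t)))) \<le> B"
proof -
  have radon: "\<forall>\<mu>\<in>A. complex_radon \<mu>"
    using pd unfolding positive_definite_def by blast
  have "\<exists>B. \<forall>\<mu>\<in>A. \<forall>t. Re (\<mu> (conv (tent_wave d t) (tilde (tent_wave d t)))) \<le> B"
  proof (rule vaguely_bounded_uniform_bound[OF radon vb conv_tent_wave_Cc
        norm_conv_tent_wave_le[OF d] conv_tent_wave_support compact_cball])
    show "0 \<le> Re (\<mu> (conv (tent_wave d t) (tilde (tent_wave d t))))" if "\<mu> \<in> A" for \<mu> t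
      using pd that tent_wave_Cc unfolding positive_definite_def by blast
  qed
  then show ?thesis using that by blast
qed

theorem corollary8p4:
  fixes A :: "(('a::euclidean_space \<Rightarrow> complex) \<Rightarrow> complex) set"
  assumes "\<forall>\<mu>\<in>A. positive_definite \<mu>"
    and "vaguely_bounded A"
  shows "equi_translation_bounded {\<nu>. \<exists>\<mu>\<in>A. is_fourier_transform \<mu> \<nu>}"
  unfolding equi_translation_bounded_def
proof (intro allI impI)
  fix K :: "'a set"
  assume K: "compact K"
  obtain d c where d: "d > 0" and c: "c > 0"
    and lower: "\<And>t y. y - t \<in> K \<Longrightarrow> c \<le> cmod (icheck (tent_wave d t) y)"
    using tent_wave_icheck_bounded_below[OF K] by blast
  obtain B where B: "\<And>\<mu> t. \<mu> \<in> A \<Longrightarrow> Re (\<mu> (conv (tent_wave d t) (tilde (tent_wave d t)))) \<le> B"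
    using positive_definite_tent_wave_bound[OF assms] d by (metis less_imp_le)
  show "\<exists>C. \<forall>\<nu>\<in>{\<nu>. \<exists>\<mu>\<in>A. is_fourier_transform \<mu> \<nu>}. \<forall>t. emeasure \<nu> ((\<lambda>x. t + x) ` K) \<le> ennreal C"
  proof (intro exI ballI allI)
    fix \<nu> t
    assume "\<nu> \<in> {\<nu>. \<exists>\<mu>\<in>A. is_fourier_transform \<mu> \<nu>}"
    then obtain \<mu> where \<mu>: "\<mu> \<in> A" "is_fourier_transform \<mu> \<nu>" by blast
    have "emeasure \<nu> ((\<lambda>x. t + x) ` K) \<le> ennreal (Re (\<mu> (conv (tent_wave d t) (tilde (tent_wave d t)))) / c\<^sup>2)"
      using compact_translation[OF K, of t] lower
      by (intro fourier_transform_emeasure_le[OF \<mu>(2) tent_wave_Cc _ c]) auto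
    also have "\<dots> \<le> ennreal (B / c\<^sup>2)"
      using B[OF \<mu>(1)] by (intro ennreal_leI divide_right_mono) auto
    finally show "emeasure \<nu> ((\<lambda>x. t + x) ` K) \<le> ennreal (B / c\<^sup>2)" .
  qed
qed

end
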